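(* Let $G$ be a cograph and let $\sigma$ be a greedy coloring of $G$ with color set $\{1,2,\dots,\chi(G)\}$ ordered naturally. Let $G_1=(V_1,E_1)$ be a connected component of $G$. Then $\sigma(V_1)=\{1,\dots,\chi(G_1)\}$.
   Context: All graphs are finite, simple and undirected; $\chi(G)$ is the chromatic number. A cograph is a graph that is $K_1$, or a disjoint union of cographs, or a join of cographs. A greedy coloring of $G$ with ordered color set $1<2<\dots$ is obtained by processing the vertices of $G$ in some order and assigning to each vertex the smallest color not already assigned to one of its previously processed neighbors. (For cographs, every greedy coloring uses exactly $\chi(G)$ colors.) *)

theory Defs
  imports Main
begin

text \<open>A finite simple graph is given by a vertex set V and a set E of edges,
  each edge being a 2-element subset of V.\<close>

definition adj :: "'a set set \<Rightarrow> 'a \<Rightarrow> 'a \<Rightarrow> bool" where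
  "adj E x y \<longleftrightarrow> {x, y} \<in> E"

inductive cograph :: "'a set \<Rightarrow> 'a set set \<Rightarrow> bool" where
  K1: "cograph {v} {}"
| union: "\<lbrakk>cograph V1 E1; cograph V2 E2; V1 \<inter> V2 = {}\<rbrakk>
          \<Longrightarrow> cograph (V1 \<union> V2) (E1 \<union> E2)"
| join: "\<lbrakk>cograph V1 E1; cograph V2 E2; V1 \<inter> V2 = {}\<rbrakk>
          \<Longrightarrow> cograph (V1 \<union> V2) (E1 \<union> E2 \<union> {{x, y} | x y. x \<in> V1 \<and> y \<in> V2})"

definition proper_coloring :: "'a set \<Rightarrow> 'a set set \<Rightarrow> ('a \<Rightarrow> nat) \<Rightarrow> bool" where
  "proper_coloring V E f \<longleftrightarrow> (\<forall>x\<in>V. \<forall>y\<in>V. adj E x y \<longrightarrow> f x \<noteq> f y)"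

definition chromatic_number :: "'a set \<Rightarrow> 'a set set \<Rightarrow> nat" where
  "chromatic_number V E =
     (LEAST k. \<exists>f. proper_coloring V E f \<and> f ` V \<subseteq> {1..k})"

definition greedy_coloring_by :: "'a set \<Rightarrow> 'a set set \<Rightarrow> 'a list \<Rightarrow> ('a \<Rightarrow> nat) \<Rightarrow> bool" where
  "greedy_coloring_by V E vs \<sigma> \<longleftrightarrow>
     distinct vs \<and> set vs = V \<and>
     (\<forall>i < length vs. \<sigma> (vs ! i) =
        (LEAST c. 1 \<le> c \<and> c \<notin> {\<sigma> (vs ! j) | j. j < i \<and> adj E (vs ! j) (vs ! i)}))"

definition greedy_coloring :: "'a set \<Rightarrow> 'a set set \<Rightarrow> ('a \<Rightarrow> nat) \<Rightarrow> bool" where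
  "greedy_coloring V E \<sigma> \<longleftrightarrow> (\<exists>vs. greedy_coloring_by V E vs \<sigma>)"

definition component :: "'a set \<Rightarrow> 'a set set \<Rightarrow> 'a set \<Rightarrow> bool" where
  "component V E V1 \<longleftrightarrow>
     (\<exists>x\<in>V. V1 = {y \<in> V. (\<lambda>u w. u \<in> V \<and> w \<in> V \<and> adj E u w)\<^sup>*\<^sup>* x y})"

definition induced_edges :: "'a set set \<Rightarrow> 'a set \<Rightarrow> 'a set set" where
  "induced_edges E V1 = {e \<in> E. e \<subseteq> V1}"

end

theory Submission
  imports Defs
begin

text \<open>Only the order-free Grundy property of a greedy colouring matters: a vertex of
  colour c has neighbours of every smaller colour that occurs. In a cograph, a Grundy
  colouring s of any vertex set W uses no more colours than any proper colouring f of W.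
  For a disjoint union the colour sets of the two sides are nested, since a vertex
  carrying the larger missing colour would need a neighbour of the smaller one on its
  own side; for a join they are disjoint, for s and f alike, so the counts add.
  A component V1 is closed under adjacency, so the greedy colours on V1 form an interval
  {1..m} and restrict to a Grundy colouring of V1, which is therefore optimal: m is the
  chromatic number of V1.\<close>

text \<open>Only colours occurring on W are required, so that the property passes to the
  two sides of a union or a join.\<close>
definition grundy_coloring :: "'a set \<Rightarrow> 'a set set \<Rightarrow> ('a \<Rightarrow> nat) \<Rightarrow> bool" where
  "grundy_coloring W E s \<longleftrightarrow> proper_coloring W E s \<and>
     (\<forall>v\<in>W. \<forall>c\<in>s ` W. c < s v \<longrightarrow> (\<exists>u\<in>W. adj E v u \<and> s u = c))"

lemma adj_commute: "adj E x y \<longleftrightarrow> adj E y x"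
  unfolding adj_def by (simp add: insert_commute)

lemma proper_coloring_mono:
  "proper_coloring W E f \<Longrightarrow> W' \<subseteq> W \<Longrightarrow> E' \<subseteq> E \<Longrightarrow> proper_coloring W' E' f"
  unfolding proper_coloring_def adj_def by blast

lemma proper_coloring_induced_edges_iff:
  "proper_coloring W (induced_edges E W) f \<longleftrightarrow> proper_coloring W E f"
  unfolding proper_coloring_def induced_edges_def adj_def by auto

lemma chromatic_number_eqI:
  assumes "proper_coloring V E s" "s ` V = {1..k}"
    and "\<And>f. proper_coloring V E f \<Longrightarrow> k \<le> card (f ` V)"
  shows "chromatic_number V E = k"
  unfolding chromatic_number_def
proof (rule Least_equality)
  show "\<exists>f. proper_coloring V E f \<and> f ` V \<subseteq> {1..k}"
    using assms(1,2) by auto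
next
  fix k' assume "\<exists>f. proper_coloring V E f \<and> f ` V \<subseteq> {1..k'}"
  then obtain f where "proper_coloring V E f" "f ` V \<subseteq> {1..k'}" by blast
  then have "k \<le> card (f ` V)" using assms(3) by blast
  also have "\<dots> \<le> card {1..k'}" using \<open>f ` V \<subseteq> {1..k'}\<close> by (intro card_mono) simp_all
  finally show "k \<le> k'" by simp
qed

lemma cograph_finite: "cograph V E \<Longrightarrow> finite V"
  by (induction rule: cograph.induct) auto

lemma cograph_adjD: "cograph V E \<Longrightarrow> adj E x y \<Longrightarrow> x \<in> V \<and> y \<in> V \<and> x \<noteq> y"
  by (induction arbitrary: x y rule: cograph.induct) (auto simp: adj_def doubleton_eq_iff)

lemma cograph_union_adj:
  assumes "cograph V1 E1" "cograph V2 E2" "V1 \<inter> V2 = {}"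
    and "x \<in> V1"
  shows "adj (E1 \<union> E2) x y \<longleftrightarrow> adj E1 x y"
  using assms cograph_adjD[OF assms(2), of x y] unfolding adj_def by auto

lemma cograph_union_no_cross_adj:
  assumes "cograph V1 E1" "cograph V2 E2" "V1 \<inter> V2 = {}" "x \<in> V1" "y \<in> V2"
  shows "\<not> adj (E1 \<union> E2) x y"
  using cograph_union_adj[OF assms(1-4)] cograph_adjD[OF assms(1), of x y] assms(3,5) by blast

lemma cograph_join_adj:
  assumes "cograph V1 E1" "cograph V2 E2" "V1 \<inter> V2 = {}" "v \<in> V1"
  shows "adj (E1 \<union> E2 \<union> {{x, y} | x y. x \<in> V1 \<and> y \<in> V2}) v u \<longleftrightarrow> adj E1 v u \<or> u \<in> V2"
  using assms cograph_adjD[OF assms(2), of v u] unfolding adj_def by (auto simp: doubleton_eq_iff)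

lemma grundy_coloring_restrict:
  assumes "grundy_coloring W E s" "W' \<subseteq> W" "E' \<subseteq> E"
    and "\<And>v u. v \<in> W' \<Longrightarrow> u \<in> W \<Longrightarrow> adj E v u \<Longrightarrow> s u \<in> s ` W' \<Longrightarrow> u \<in> W' \<and> adj E' v u"
  shows "grundy_coloring W' E' s"
  unfolding grundy_coloring_def
proof (intro conjI ballI impI)
  show "proper_coloring W' E' s"
    using assms(1) proper_coloring_mono[OF _ assms(2,3)] unfolding grundy_coloring_def by blast
next
  fix v c assume "v \<in> W'" "c \<in> s ` W'" "c < s v"
  moreover have "v \<in> W" "c \<in> s ` W"
    using assms(2) \<open>v \<in> W'\<close> \<open>c \<in> s ` W'\<close> by auto
  ultimately obtain u where "u \<in> W" "adj E v u" "s u = c"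
    using assms(1) unfolding grundy_coloring_def by blast
  then show "\<exists>u\<in>W'. adj E' v u \<and> s u = c"
    using assms(4) \<open>v \<in> W'\<close> \<open>c \<in> s ` W'\<close> by blast
qed

lemma grundy_color_below_other_side:
  assumes "grundy_coloring (W1 \<union> W2) E s" and no_edge: "\<And>x y. x \<in> W1 \<Longrightarrow> y \<in> W2 \<Longrightarrow> \<not> adj E x y"
    and "c \<in> s ` W1" "d \<in> s ` W2" "c < d"
  shows "c \<in> s ` W2"
proof -
  obtain w where "w \<in> W2" "s w = d" using assms(4) by blast
  with assms(1,3,5) obtain u where "u \<in> W1 \<union> W2" "adj E w u" "s u = c"
    unfolding grundy_coloring_def by blast
  moreover have "u \<notin> W1"
    using no_edge \<open>w \<in> W2\<close> \<open>adj E w u\<close> adj_commute by metis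
  ultimately show ?thesis by blast
qed

lemma grundy_colors_nested:
  assumes "grundy_coloring (W1 \<union> W2) E s" and no_edge: "\<And>x y. x \<in> W1 \<Longrightarrow> y \<in> W2 \<Longrightarrow> \<not> adj E x y"
  shows "s ` W1 \<subseteq> s ` W2 \<or> s ` W2 \<subseteq> s ` W1"
proof (rule ccontr)
  assume "\<not> ?thesis"
  then obtain c d where cd: "c \<in> s ` W1" "c \<notin> s ` W2" "d \<in> s ` W2" "d \<notin> s ` W1" by blast
  have swapped: "grundy_coloring (W2 \<union> W1) E s" "\<And>x y. x \<in> W2 \<Longrightarrow> y \<in> W1 \<Longrightarrow> \<not> adj E x y"
    using assms(1) by (simp add: Un_commute) (metis no_edge adj_commute)
  have "\<not> d < c"
    using grundy_color_below_other_side[OF swapped cd(3) cd(1)] cd(4) by blast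
  moreover have "\<not> c < d"
    using grundy_color_below_other_side[OF assms cd(1) cd(3)] cd(2) by blast
  moreover have "c \<noteq> d" using cd(1,4) by blast
  ultimately show False by linarith
qed

lemma grundy_coloring_union_side:
  assumes "cograph V1 E1" "cograph V2 E2" "V1 \<inter> V2 = {}" "W1 \<subseteq> V1" "W2 \<subseteq> V2"
    and "grundy_coloring (W1 \<union> W2) (E1 \<union> E2) s"
  shows "grundy_coloring W1 E1 s"
  using assms(6)
proof (rule grundy_coloring_restrict)
  fix v u assume "v \<in> W1" "u \<in> W1 \<union> W2" "adj (E1 \<union> E2) v u"
  then have "adj E1 v u" using cograph_union_adj[OF assms(1-3), of v u] assms(4) \<open>v \<in> W1\<close> by auto
  moreover have "u \<notin> W2" using cograph_adjD[OF assms(1) \<open>adj E1 v u\<close>] assms(3,5) by auto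
  ultimately show "u \<in> W1 \<and> adj E1 v u" using \<open>u \<in> W1 \<union> W2\<close> by simp
qed auto

lemma join_edges_commute:
  "{{x, y} | x y. x \<in> V1 \<and> y \<in> V2} = {{x, y} | x y. x \<in> V2 \<and> y \<in> V1}"
  by (auto simp: insert_commute)

lemma grundy_coloring_join_side:
  assumes "cograph V1 E1" "cograph V2 E2" "V1 \<inter> V2 = {}" "W1 \<subseteq> V1" "W2 \<subseteq> V2"
    and "grundy_coloring (W1 \<union> W2) (E1 \<union> E2 \<union> {{x, y} | x y. x \<in> V1 \<and> y \<in> V2}) s"
  shows "grundy_coloring W1 E1 s"
  using assms(6)
proof (rule grundy_coloring_restrict)
  let ?E = "E1 \<union> E2 \<union> {{x, y} | x y. x \<in> V1 \<and> y \<in> V2}"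
  note adj_iff = cograph_join_adj[OF assms(1-3)]
  fix v u assume "v \<in> W1" "u \<in> W1 \<union> W2" "adj ?E v u" and u_color: "s u \<in> s ` W1"
  from u_color obtain w where "w \<in> W1" "s w = s u" by (metis imageE)
  have "u \<notin> W2"
  proof
    assume "u \<in> W2"
    then have "adj ?E w u" using adj_iff[of w u] \<open>w \<in> W1\<close> assms(4,5) by auto
    then show False
      using assms(6) \<open>w \<in> W1\<close> \<open>u \<in> W2\<close> \<open>s w = s u\<close>
      unfolding grundy_coloring_def proper_coloring_def by blast
  qed
  with \<open>u \<in> W1 \<union> W2\<close> have "u \<in> W1" by simp
  then show "u \<in> W1 \<and> adj E1 v u"
    using adj_iff[of v u] \<open>v \<in> W1\<close> \<open>adj ?E v u\<close> assms(3,4) by auto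
qed auto

lemma card_colors_le_disjoint_union:
  assumes "finite (W1 \<union> W2)" "grundy_coloring (W1 \<union> W2) E s"
    and "\<And>x y. x \<in> W1 \<Longrightarrow> y \<in> W2 \<Longrightarrow> \<not> adj E x y"
    and "card (s ` W1) \<le> card (f ` W1)" "card (s ` W2) \<le> card (f ` W2)"
  shows "card (s ` (W1 \<union> W2)) \<le> card (f ` (W1 \<union> W2))"
proof -
  have "s ` (W1 \<union> W2) = s ` W1 \<or> s ` (W1 \<union> W2) = s ` W2"
    using grundy_colors_nested[OF assms(2,3)] by auto
  moreover have "card (f ` W1) \<le> card (f ` (W1 \<union> W2))" "card (f ` W2) \<le> card (f ` (W1 \<union> W2))"
    using assms(1) by (simp_all add: card_mono image_mono)
  ultimately show ?thesis using assms(4,5) by auto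
qed

lemma card_colors_complete_join:
  assumes "finite (W1 \<union> W2)" "proper_coloring (W1 \<union> W2) E g"
    and "\<And>x y. x \<in> W1 \<Longrightarrow> y \<in> W2 \<Longrightarrow> adj E x y"
  shows "card (g ` (W1 \<union> W2)) = card (g ` W1) + card (g ` W2)"
proof -
  have "g ` W1 \<inter> g ` W2 = {}"
    using assms(2,3) unfolding proper_coloring_def by fastforce
  then show ?thesis using assms(1) by (simp add: image_Un card_Un_disjoint)
qed

lemma cograph_grundy_card_colors_le:
  assumes "cograph V E" "W \<subseteq> V" "grundy_coloring W E s" "proper_coloring W E f"
  shows "card (s ` W) \<le> card (f ` W)"
  using assms
proof (induction arbitrary: W rule: cograph.induct)
  case (K1 v)
  then have "W = {} \<or> W = {v}" by auto
  then show ?case by auto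
next
  case (union V1 E1 V2 E2)
  obtain W1 W2 where W: "W1 \<subseteq> V1" "W2 \<subseteq> V2" "W = W1 \<union> W2"
    by (rule subset_UnE[OF union.prems(1)])
  have s: "grundy_coloring (W1 \<union> W2) (E1 \<union> E2) s" and f: "proper_coloring (W1 \<union> W2) (E1 \<union> E2) f"
    using union.prems(2,3) unfolding W(3) by simp_all
  have "grundy_coloring (W2 \<union> W1) (E2 \<union> E1) s" "V2 \<inter> V1 = {}"
    using s union.hyps(3) by (simp_all add: Un_commute Int_commute)
  note sides = grundy_coloring_union_side[OF union.hyps W(1,2) s]
    grundy_coloring_union_side[OF union.hyps(2,1) this(2) W(2,1) this(1)]
  have "finite W"
    using union.prems(1) cograph_finite[OF cograph.union[OF union.hyps]] by (rule finite_subset)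
  show ?case
    unfolding W(3)
  proof (rule card_colors_le_disjoint_union[OF _ s])
    show "finite (W1 \<union> W2)" using \<open>finite W\<close> unfolding W(3) .
    show "\<not> adj (E1 \<union> E2) x y" if "x \<in> W1" "y \<in> W2" for x y
      using cograph_union_no_cross_adj[OF union.hyps, of x y] that W(1,2) by auto
    show "card (s ` W1) \<le> card (f ` W1)"
      using union.IH(1)[OF W(1) sides(1) proper_coloring_mono[OF f Un_upper1 Un_upper1]] .
    show "card (s ` W2) \<le> card (f ` W2)"
      using union.IH(2)[OF W(2) sides(2) proper_coloring_mono[OF f Un_upper2 Un_upper2]] .
  qed
next
  case (join V1 E1 V2 E2)
  let ?E = "E1 \<union> E2 \<union> {{x, y} |x y. x \<in> V1 \<and> y \<in> V2}"
  obtain W1 W2 where W: "W1 \<subseteq> V1" "W2 \<subseteq> V2" "W = W1 \<union> W2"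
    by (rule subset_UnE[OF join.prems(1)])
  have s: "grundy_coloring (W1 \<union> W2) ?E s" and f: "proper_coloring (W1 \<union> W2) ?E f"
    using join.prems(2,3) unfolding W(3) by simp_all
  have "grundy_coloring (W2 \<union> W1) (E2 \<union> E1 \<union> {{x, y} |x y. x \<in> V2 \<and> y \<in> V1}) s" "V2 \<inter> V1 = {}"
    using s join.hyps(3) by (simp_all add: join_edges_commute[of V2 V1] Un_ac Int_commute)
  note sides = grundy_coloring_join_side[OF join.hyps W(1,2) s]
    grundy_coloring_join_side[OF join.hyps(2,1) this(2) W(2,1) this(1)]
  have "proper_coloring W1 E1 f" "proper_coloring W2 E2 f"
    using proper_coloring_mono[OF f, of W1 E1] proper_coloring_mono[OF f, of W2 E2] by auto
  then have IH: "card (s ` W1) \<le> card (f ` W1)" "card (s ` W2) \<le> card (f ` W2)"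
    using join.IH(1)[OF W(1) sides(1)] join.IH(2)[OF W(2) sides(2)] by simp_all
  have "finite W"
    using join.prems(1) cograph_finite[OF cograph.join[OF join.hyps]] by (rule finite_subset)
  then have fin: "finite (W1 \<union> W2)" unfolding W(3) .
  have cross: "adj ?E x y" if "x \<in> W1" "y \<in> W2" for x y
    using cograph_join_adj[OF join.hyps, of x y] that W(1,2) by auto
  have "proper_coloring (W1 \<union> W2) ?E s" using s unfolding grundy_coloring_def by simp
  then have "card (s ` W) = card (s ` W1) + card (s ` W2)"
    unfolding W(3) by (rule card_colors_complete_join[OF fin _ cross])
  also have "\<dots> \<le> card (f ` W1) + card (f ` W2)" using IH by (rule add_mono)
  also have "\<dots> = card (f ` W)"
    unfolding W(3) by (rule card_colors_complete_join[OF fin f cross, symmetric])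
  finally show ?case .
qed

lemma Least_pos_notin_finite:
  fixes X :: "nat set"
  assumes "finite X"
  shows "1 \<le> (LEAST c. 1 \<le> c \<and> c \<notin> X)" "(LEAST c. 1 \<le> c \<and> c \<notin> X) \<notin> X"
    and "1 \<le> c \<Longrightarrow> c < (LEAST c. 1 \<le> c \<and> c \<notin> X) \<Longrightarrow> c \<in> X"
proof -
  obtain n where "n \<notin> insert 0 X"
    using ex_new_if_finite[OF infinite_UNIV_nat, of "insert 0 X"] assms by auto
  then have "\<exists>c. 1 \<le> c \<and> c \<notin> X" by (intro exI[of _ n]) auto
  from LeastI_ex[OF this] show "1 \<le> (LEAST c. 1 \<le> c \<and> c \<notin> X)" "(LEAST c. 1 \<le> c \<and> c \<notin> X) \<notin> X"
    by simp_all
  show "1 \<le> c \<Longrightarrow> c < (LEAST c. 1 \<le> c \<and> c \<notin> X) \<Longrightarrow> c \<in> X"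
    using not_less_Least by blast
qed

lemma greedy_coloring_byD:
  assumes "greedy_coloring_by V E vs \<sigma>" "i < length vs"
  defines "X \<equiv> {\<sigma> (vs ! j) | j. j < i \<and> adj E (vs ! j) (vs ! i)}"
  shows "1 \<le> \<sigma> (vs ! i)" "\<sigma> (vs ! i) \<notin> X" "1 \<le> c \<Longrightarrow> c < \<sigma> (vs ! i) \<Longrightarrow> c \<in> X"
proof -
  have "X \<subseteq> (\<lambda>j. \<sigma> (vs ! j)) ` {..<i}" unfolding X_def by auto
  then have "finite X" by (rule finite_surj[OF finite_lessThan])
  moreover have "\<sigma> (vs ! i) = (LEAST c. 1 \<le> c \<and> c \<notin> X)"
    using assms(1,2) unfolding greedy_coloring_by_def X_def by blast
  ultimately show "1 \<le> \<sigma> (vs ! i)" "\<sigma> (vs ! i) \<notin> X" "1 \<le> c \<Longrightarrow> c < \<sigma> (vs ! i) \<Longrightarrow> c \<in> X"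
    using Least_pos_notin_finite by simp_all
qed

lemma greedy_coloring_by_pos:
  assumes "greedy_coloring_by V E vs \<sigma>" "v \<in> V"
  shows "1 \<le> \<sigma> v"
proof -
  obtain i where "i < length vs" "v = vs ! i"
    using assms unfolding greedy_coloring_by_def by (metis in_set_conv_nth)
  then show ?thesis using greedy_coloring_byD(1)[OF assms(1)] by simp
qed

lemma greedy_coloring_by_smaller_color:
  assumes "greedy_coloring_by V E vs \<sigma>" "v \<in> V" "1 \<le> c" "c < \<sigma> v"
  shows "\<exists>u\<in>V. adj E v u \<and> \<sigma> u = c"
proof -
  obtain i where i: "i < length vs" "v = vs ! i"
    using assms(1,2) unfolding greedy_coloring_by_def by (metis in_set_conv_nth)
  then obtain j where "j < i" "adj E (vs ! j) v" "\<sigma> (vs ! j) = c"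
    using greedy_coloring_byD(3)[OF assms(1) i(1), of c] assms(3,4) by auto
  moreover have "vs ! j \<in> V"
    using \<open>j < i\<close> i(1) assms(1) unfolding greedy_coloring_by_def by auto
  ultimately show ?thesis using adj_commute by metis
qed

lemma greedy_coloring_by_proper:
  assumes "greedy_coloring_by V E vs \<sigma>" and no_loop: "\<And>x. \<not> adj E x x"
  shows "proper_coloring V E \<sigma>"
  unfolding proper_coloring_def
proof (intro ballI impI)
  fix x y assume "x \<in> V" "y \<in> V" "adj E x y"
  have earlier_neighbour: "\<sigma> (vs ! i) \<noteq> \<sigma> (vs ! j)"
    if "j < i" "i < length vs" "adj E (vs ! j) (vs ! i)" for i j
    using greedy_coloring_byD(2)[OF assms(1) that(2)] that(1,3) by blast
  obtain i j where "i < length vs" "x = vs ! i" "j < length vs" "y = vs ! j"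
    using assms(1) \<open>x \<in> V\<close> \<open>y \<in> V\<close> unfolding greedy_coloring_by_def by (metis in_set_conv_nth)
  moreover have "i \<noteq> j" using no_loop \<open>adj E x y\<close> calculation by auto
  ultimately show "\<sigma> x \<noteq> \<sigma> y"
    using earlier_neighbour \<open>adj E x y\<close> adj_commute by (metis linorder_neqE_nat)
qed

lemma greedy_coloring_by_closed_colors:
  assumes "greedy_coloring_by V E vs \<sigma>" "W \<subseteq> V" "finite W" "W \<noteq> {}"
    and closed: "\<And>v u. v \<in> W \<Longrightarrow> u \<in> V \<Longrightarrow> adj E v u \<Longrightarrow> u \<in> W"
  shows "\<sigma> ` W = {1..Max (\<sigma> ` W)}"
proof
  show "\<sigma> ` W \<subseteq> {1..Max (\<sigma> ` W)}"
    using greedy_coloring_by_pos[OF assms(1)] assms(2,3) by auto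
  have "Max (\<sigma> ` W) \<in> \<sigma> ` W" using assms(3,4) by (intro Max_in) auto
  then obtain w where "w \<in> W" and w_max: "\<sigma> w = Max (\<sigma> ` W)" by (metis imageE)
  show "{1..Max (\<sigma> ` W)} \<subseteq> \<sigma> ` W"
  proof
    fix c assume c: "c \<in> {1..Max (\<sigma> ` W)}"
    show "c \<in> \<sigma> ` W"
    proof (cases "c = \<sigma> w")
      case False
      then obtain u where "u \<in> V" "adj E w u" "\<sigma> u = c"
        using greedy_coloring_by_smaller_color[OF assms(1), of w c] c \<open>w \<in> W\<close> w_max assms(2)
        by auto
      then show ?thesis using closed \<open>w \<in> W\<close> by blast
    qed (use \<open>w \<in> W\<close> in blast)
  qed
qed

lemma greedy_coloring_by_closed_grundy:
  assumes "greedy_coloring_by V E vs \<sigma>" "\<And>x. \<not> adj E x x" "W \<subseteq> V"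
    and closed: "\<And>v u. v \<in> W \<Longrightarrow> u \<in> V \<Longrightarrow> adj E v u \<Longrightarrow> u \<in> W"
  shows "grundy_coloring W E \<sigma>"
  unfolding grundy_coloring_def
proof (intro conjI ballI impI)
  show "proper_coloring W E \<sigma>"
    using proper_coloring_mono[OF greedy_coloring_by_proper[OF assms(1,2)] assms(3) order_refl] .
  fix v c assume "v \<in> W" "c \<in> \<sigma> ` W" "c < \<sigma> v"
  moreover have "1 \<le> c" using greedy_coloring_by_pos[OF assms(1)] \<open>c \<in> \<sigma> ` W\<close> assms(3) by auto
  ultimately obtain u where "u \<in> V" "adj E v u" "\<sigma> u = c"
    using greedy_coloring_by_smaller_color[OF assms(1)] assms(3) by blast
  then show "\<exists>u\<in>W. adj E v u \<and> \<sigma> u = c" using closed \<open>v \<in> W\<close> by blast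
qed

lemma component_subset: "component V E V1 \<Longrightarrow> V1 \<subseteq> V"
  unfolding component_def by blast

lemma component_nonempty: "component V E V1 \<Longrightarrow> V1 \<noteq> {}"
  unfolding component_def by blast

lemma component_adj_closed:
  assumes "component V E V1" "v \<in> V1" "u \<in> V" "adj E v u"
  shows "u \<in> V1"
proof -
  let ?R = "\<lambda>u w. u \<in> V \<and> w \<in> V \<and> adj E u w"
  obtain x where x: "V1 = {y \<in> V. ?R\<^sup>*\<^sup>* x y}"
    using assms(1) unfolding component_def by blast
  then have "?R\<^sup>*\<^sup>* x v" "v \<in> V" using assms(2) by auto
  then have "?R\<^sup>*\<^sup>* x u" using assms(3,4) by (simp add: rtranclp.rtrancl_into_rtrancl)
  then show ?thesis using x assms(3) by blast
qed

theorem lemma4: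
  fixes V :: "'a set" and E :: "'a set set" and \<sigma> :: "'a \<Rightarrow> nat" and V1 :: "'a set"
  assumes "cograph V E"
    and "greedy_coloring V E \<sigma>"
    and "component V E V1"
  shows "\<sigma> ` V1 = {1..chromatic_number V1 (induced_edges E V1)}"
proof -
  obtain vs where greedy: "greedy_coloring_by V E vs \<sigma>"
    using assms(2) unfolding greedy_coloring_def by blast
  have no_loop: "\<not> adj E x x" for x using cograph_adjD[OF assms(1)] by blast
  have V1: "V1 \<subseteq> V" "finite V1" "V1 \<noteq> {}"
    using component_subset[OF assms(3)] component_nonempty[OF assms(3)]
      cograph_finite[OF assms(1)] finite_subset by auto
  note closed = component_adj_closed[OF assms(3)]
  define m where "m = Max (\<sigma> ` V1)"
  have colors: "\<sigma> ` V1 = {1..m}"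
    unfolding m_def using greedy_coloring_by_closed_colors[OF greedy V1 closed] .
  have grundy: "grundy_coloring V1 E \<sigma>"
    using greedy_coloring_by_closed_grundy[OF greedy no_loop V1(1) closed] .
  have "chromatic_number V1 (induced_edges E V1) = m"
  proof (rule chromatic_number_eqI[OF _ colors])
    show "proper_coloring V1 (induced_edges E V1) \<sigma>"
      using grundy unfolding grundy_coloring_def proper_coloring_induced_edges_iff by blast
    fix f assume "proper_coloring V1 (induced_edges E V1) f"
    then have "card (\<sigma> ` V1) \<le> card (f ` V1)"
      using cograph_grundy_card_colors_le[OF assms(1) V1(1) grundy]
      unfolding proper_coloring_induced_edges_iff by blast
    then show "m \<le> card (f ` V1)" using colors by simp
  qed
  with colors show ?thesis by simp
qed

end
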